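(* Let $\mathbb{K}=(G,M,I)$ be a formal context and $\mathcal{R}$ a closure system on $G$ with $\mathcal{R}\subseteq\operatorname{Ext}(\mathbb{K})$. Let $$\hat{\mathcal{R}}=\bigvee_{A\in\mathcal{M}(\operatorname{Ext}(\mathbb{K}))\setminus\mathcal{M}(\mathcal{R})}\{A,G\},$$ the join taken in the lattice ${\downarrow}\operatorname{Ext}(\mathbb{K})$. Then $\hat{\mathcal{R}}$ is the inclusion-minimum closure system in ${\downarrow}\operatorname{Ext}(\mathbb{K})$ satisfying $\mathcal{R}\vee\hat{\mathcal{R}}=\operatorname{Ext}(\mathbb{K})$.
   Context: A formal context is a triple $(G,M,I)$ with finite nonempty sets $G$, $M$ and $I\subseteq G\times M$; derivations $A'=\{m\mid\forall a\in A:(a,m)\in I\}$, $B'=\{g\mid\forall b\in B:(g,b)\in I\}$; $\operatorname{Ext}(\mathbb{K})=\{A\subseteq G\mid A''=A\}$. A closure system on $G$ is a family of subsets of $G$ containing $G$ and closed under intersections. ${\downarrow}\operatorname{Ext}(\mathbb{K})$ is the lattice of all closure systems on $G$ contained in $\operatorname{Ext}(\mathbb{K})$, ordered by inclusion; its join of a family is the smallest closure system on $G$ containing the union (an empty join is $\{G\}$). For a closure system $\mathcal{C}$ viewed as a lattice under inclusion, $\mathcal{M}(\mathcal{C})$ denotes its set of meet-irreducible elements ($x\neq\top$ and $x=\bigwedge Y$ implies $x\in Y$). *)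

theory Defs
  imports Main
begin

definition formal_context :: "'g set \<Rightarrow> 'm set \<Rightarrow> ('g \<times> 'm) set \<Rightarrow> bool" where
  "formal_context G M I \<longleftrightarrow> finite G \<and> G \<noteq> {} \<and> finite M \<and> M \<noteq> {} \<and> I \<subseteq> G \<times> M"

definition obj_der :: "'m set \<Rightarrow> ('g \<times> 'm) set \<Rightarrow> 'g set \<Rightarrow> 'm set" where
  "obj_der M I A = {m \<in> M. \<forall>a\<in>A. (a, m) \<in> I}"

definition attr_der :: "'g set \<Rightarrow> ('g \<times> 'm) set \<Rightarrow> 'm set \<Rightarrow> 'g set" where
  "attr_der G I B = {g \<in> G. \<forall>b\<in>B. (g, b) \<in> I}"

definition Ext :: "'g set \<Rightarrow> 'm set \<Rightarrow> ('g \<times> 'm) set \<Rightarrow> 'g set set" where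
  "Ext G M I = {A. A \<subseteq> G \<and> attr_der G I (obj_der M I A) = A}"

(* closure system on G: family of subsets of G containing G, closed under intersections
   (the intersection of the empty subfamily is taken to be G) *)
definition closure_system :: "'g set \<Rightarrow> 'g set set \<Rightarrow> bool" where
  "closure_system G C \<longleftrightarrow> C \<subseteq> Pow G \<and> G \<in> C \<and> (\<forall>S. S \<subseteq> C \<longrightarrow> G \<inter> \<Inter>S \<in> C)"

definition cs_join :: "'g set \<Rightarrow> 'g set set set \<Rightarrow> 'g set set" where
  "cs_join G F = \<Inter>{C. closure_system G C \<and> \<Union>F \<subseteq> C}"

definition meet_irr :: "'g set \<Rightarrow> 'g set set \<Rightarrow> 'g set set" where
  "meet_irr G C = {x \<in> C. x \<noteq> G \<and> (\<forall>Y. Y \<subseteq> C \<longrightarrow> x = G \<inter> \<Inter>Y \<longrightarrow> x \<in> Y)}"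

end

theory Submission
  imports Defs
begin

text \<open>Over a finite ground set every member of a closure system is the intersection of the
  meet-irreducible members above it, so a closure system is contained in every closure system
  that contains its meet-irreducibles. An extent in \<open>R\<close> that is meet-irreducible in \<open>Ext\<close> is
  meet-irreducible in \<open>R\<close>; hence \<open>R\<close> together with the extents in \<open>\<M>(Ext) - \<M>(R)\<close> contains all
  of \<open>\<M>(Ext)\<close> and generates \<open>Ext\<close>. Conversely, a meet-irreducible member of a join is one of
  the generators, and the extents in \<open>\<M>(Ext) - \<M>(R)\<close> do not lie in \<open>R\<close> at all, so every
  \<open>S\<close> with \<open>R \<or> S = Ext\<close> contains them and therefore contains the system they generate.\<close>

lemma closure_system_Inter_closure:
  "closure_system G {G \<inter> \<Inter>T | T. T \<subseteq> X}"
  unfolding closure_system_def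
proof (intro conjI allI impI)
  show "{G \<inter> \<Inter>T | T. T \<subseteq> X} \<subseteq> Pow G" by auto
  show "G \<in> {G \<inter> \<Inter>T | T. T \<subseteq> X}" by blast
next
  fix S assume "S \<subseteq> {G \<inter> \<Inter>T | T. T \<subseteq> X}"
  then have "\<forall>A\<in>S. \<exists>T. A = G \<inter> \<Inter>T \<and> T \<subseteq> X" by blast
  then obtain T where T: "\<And>A. A \<in> S \<Longrightarrow> A = G \<inter> \<Inter>(T A) \<and> T A \<subseteq> X"
    by metis
  have "G \<inter> \<Inter>S = G \<inter> \<Inter>(\<Union>A\<in>S. T A)"
  proof (intro equalityI subsetI)
    fix z assume z: "z \<in> G \<inter> \<Inter>(\<Union>A\<in>S. T A)"
    have "z \<in> A" if "A \<in> S" for A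
      using z T[OF that] that by auto
    with z show "z \<in> G \<inter> \<Inter>S" by blast
  qed (use T in blast)
  moreover have "(\<Union>A\<in>S. T A) \<subseteq> X"
    using T by blast
  ultimately show "G \<inter> \<Inter>S \<in> {G \<inter> \<Inter>T | T. T \<subseteq> X}"
    by blast
qed

lemma cs_join_upper: "\<Union>F \<subseteq> cs_join G F"
  unfolding cs_join_def by blast

lemma cs_join_least:
  assumes "closure_system G C" and "\<Union>F \<subseteq> C"
  shows "cs_join G F \<subseteq> C"
  using assms unfolding cs_join_def by blast

lemma cs_join_eq_Inter_closure:
  assumes "\<Union>F \<subseteq> Pow G"
  shows "cs_join G F = {G \<inter> \<Inter>T | T. T \<subseteq> \<Union>F}"
proof
  have "\<Union>F \<subseteq> {G \<inter> \<Inter>T | T. T \<subseteq> \<Union>F}"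
  proof
    fix A assume "A \<in> \<Union>F"
    moreover from this have "A = G \<inter> \<Inter>{A}"
      using assms by blast
    ultimately show "A \<in> {G \<inter> \<Inter>T | T. T \<subseteq> \<Union>F}"
      by blast
  qed
  then show "cs_join G F \<subseteq> {G \<inter> \<Inter>T | T. T \<subseteq> \<Union>F}"
    by (rule cs_join_least[OF closure_system_Inter_closure])
  show "{G \<inter> \<Inter>T | T. T \<subseteq> \<Union>F} \<subseteq> cs_join G F"
  proof
    fix A assume "A \<in> {G \<inter> \<Inter>T | T. T \<subseteq> \<Union>F}"
    then obtain T where "A = G \<inter> \<Inter>T" and "T \<subseteq> \<Union>F"
      by blast
    moreover have "G \<inter> \<Inter>T \<in> C" if "closure_system G C" and "\<Union>F \<subseteq> C" for C
      using that \<open>T \<subseteq> \<Union>F\<close> unfolding closure_system_def by (meson subset_trans)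
    ultimately show "A \<in> cs_join G F"
      unfolding cs_join_def by auto
  qed
qed

lemma closure_system_cs_join:
  assumes "\<Union>F \<subseteq> Pow G"
  shows "closure_system G (cs_join G F)"
  unfolding cs_join_eq_Inter_closure[OF assms] by (rule closure_system_Inter_closure)

lemma meet_irr_cs_join_generators:
  assumes "\<Union>F \<subseteq> Pow G" and "A \<in> meet_irr G (cs_join G F)"
  shows "A \<in> \<Union>F"
proof -
  have irr: "\<And>Y. Y \<subseteq> cs_join G F \<Longrightarrow> A = G \<inter> \<Inter>Y \<Longrightarrow> A \<in> Y"
    and "A \<in> cs_join G F"
    using assms(2) unfolding meet_irr_def by blast+
  then obtain T where "A = G \<inter> \<Inter>T" and "T \<subseteq> \<Union>F"
    unfolding cs_join_eq_Inter_closure[OF assms(1)] by blast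
  moreover from this have "T \<subseteq> cs_join G F"
    using cs_join_upper by blast
  ultimately show ?thesis
    using irr by blast
qed

lemma meet_irr_subset: "meet_irr G C \<subseteq> C"
  unfolding meet_irr_def by blast

lemma meet_irr_subsystem:
  assumes "R \<subseteq> C" and "A \<in> meet_irr G C" and "A \<in> R"
  shows "A \<in> meet_irr G R"
  using assms unfolding meet_irr_def by (simp add: subset_trans)

lemma closure_system_eq_Inter_meet_irr:
  assumes "finite G" and "closure_system G C" and "E \<in> C"
  shows "E = G \<inter> \<Inter>{A \<in> meet_irr G C. E \<subseteq> A}"
  using assms(3)
proof (induction "card (G - E)" arbitrary: E rule: less_induct)
  case less
  have "E \<subseteq> G"
    using assms(2) less.prems unfolding closure_system_def by blast
  have "G \<inter> \<Inter>{A \<in> meet_irr G C. E \<subseteq> A} \<subseteq> E"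
  proof (cases "E = G \<or> E \<in> meet_irr G C")
    case False
    \<comment> \<open>then \<open>E\<close> is the meet of strictly larger closed sets, to which the induction hypothesis applies\<close>
    then obtain Y where Y: "Y \<subseteq> C" "E = G \<inter> \<Inter>Y" "E \<notin> Y"
      using less.prems unfolding meet_irr_def by blast
    have "G \<inter> \<Inter>{A \<in> meet_irr G C. E \<subseteq> A} \<subseteq> B" if "B \<in> Y" for B
    proof -
      have "B \<in> C" and "E \<subset> B"
        using Y that by blast+
      moreover have "B \<subseteq> G"
        using assms(2) \<open>B \<in> C\<close> unfolding closure_system_def by blast
      ultimately have "card (G - B) < card (G - E)"
        using assms(1) by (intro psubset_card_mono) auto
      then have B_eq: "B = G \<inter> \<Inter>{A \<in> meet_irr G C. B \<subseteq> A}"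
        using less.hyps \<open>B \<in> C\<close> by blast
      have "G \<inter> \<Inter>{A \<in> meet_irr G C. E \<subseteq> A} \<subseteq> G \<inter> \<Inter>{A \<in> meet_irr G C. B \<subseteq> A}"
        using \<open>E \<subset> B\<close> by blast
      also have "\<dots> = B"
        by (rule B_eq[symmetric])
      finally show ?thesis .
    qed
    then have "G \<inter> \<Inter>{A \<in> meet_irr G C. E \<subseteq> A} \<subseteq> G \<inter> \<Inter>Y"
      by blast
    then show ?thesis
      unfolding Y(2)[symmetric] .
  qed auto
  moreover have "E \<subseteq> G \<inter> \<Inter>{A \<in> meet_irr G C. E \<subseteq> A}"
    using \<open>E \<subseteq> G\<close> by blast
  ultimately show ?case
    by (rule equalityI[rotated])
qed

lemma closure_system_subset_if_meet_irr_subset: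
  assumes "finite G" and "closure_system G C" and "closure_system G K"
    and "meet_irr G C \<subseteq> K"
  shows "C \<subseteq> K"
proof
  fix E assume "E \<in> C"
  have "{A \<in> meet_irr G C. E \<subseteq> A} \<subseteq> K"
    using assms(4) by blast
  then have "G \<inter> \<Inter>{A \<in> meet_irr G C. E \<subseteq> A} \<in> K"
    using assms(3) unfolding closure_system_def by blast
  then show "E \<in> K"
    using closure_system_eq_Inter_meet_irr[OF assms(1,2) \<open>E \<in> C\<close>] by metis
qed

lemma closure_system_Ext: "closure_system G (Ext G M I)"
  unfolding closure_system_def
proof (intro conjI allI impI)
  show "Ext G M I \<subseteq> Pow G" and "G \<in> Ext G M I"
    unfolding Ext_def attr_der_def obj_der_def by auto
next
  fix S assume S: "S \<subseteq> Ext G M I"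
  let ?X = "G \<inter> \<Inter>S"
  have "attr_der G I (obj_der M I ?X) \<subseteq> A" if "A \<in> S" for A
  proof -
    have "obj_der M I A \<subseteq> obj_der M I ?X"
      using that unfolding obj_der_def by auto
    then have "attr_der G I (obj_der M I ?X) \<subseteq> attr_der G I (obj_der M I A)"
      unfolding attr_der_def by auto
    also have "\<dots> = A"
      using S that unfolding Ext_def by blast
    finally show ?thesis .
  qed
  moreover have "?X \<subseteq> attr_der G I (obj_der M I ?X)"
    and "attr_der G I (obj_der M I ?X) \<subseteq> G"
    unfolding attr_der_def obj_der_def by auto
  ultimately show "?X \<in> Ext G M I"
    unfolding Ext_def by blast
qed

lemma cs_join_eq_if_meet_irr_subset:
  assumes "finite G" and "closure_system G C" and "\<Union>F \<subseteq> C" and "meet_irr G C \<subseteq> \<Union>F"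
  shows "cs_join G F = C"
proof
  show "cs_join G F \<subseteq> C"
    using assms(2,3) by (rule cs_join_least)
  have "\<Union>F \<subseteq> Pow G"
    using assms(2,3) unfolding closure_system_def by blast
  then have "closure_system G (cs_join G F)"
    by (rule closure_system_cs_join)
  moreover have "meet_irr G C \<subseteq> cs_join G F"
    using assms(4) cs_join_upper by blast
  ultimately show "C \<subseteq> cs_join G F"
    by (rule closure_system_subset_if_meet_irr_subset[OF assms(1,2)])
qed

lemma meet_irr_diff_subset_if_cs_join_eq:
  assumes "closure_system G C" and "R \<subseteq> C" and "S \<subseteq> C" and "cs_join G {R, S} = C"
  shows "meet_irr G C - meet_irr G R \<subseteq> S"
proof
  fix A assume A: "A \<in> meet_irr G C - meet_irr G R"
  have "\<Union>{R, S} \<subseteq> Pow G"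
    using assms(1-3) unfolding closure_system_def by blast
  then have "A \<in> R \<union> S"
    using A assms(4) meet_irr_cs_join_generators[of "{R, S}" G A] by auto
  moreover have "A \<notin> R"
    using A meet_irr_subsystem[OF assms(2), of A G] by blast
  ultimately show "A \<in> S"
    by blast
qed

lemma subset_cs_join_pairs: "D \<subseteq> cs_join G {{A, G} | A. A \<in> D}"
proof -
  have "D \<subseteq> \<Union>{{A, G} | A. A \<in> D}"
    by blast
  also have "\<dots> \<subseteq> cs_join G {{A, G} | A. A \<in> D}"
    by (rule cs_join_upper)
  finally show ?thesis .
qed

lemma cs_join_pairs_least:
  assumes "closure_system G C" and "D \<subseteq> C"
  shows "cs_join G {{A, G} | A. A \<in> D} \<subseteq> C"
proof (rule cs_join_least[OF assms(1)])
  have "G \<in> C"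
    using assms(1) unfolding closure_system_def by blast
  with assms(2) show "\<Union>{{A, G} | A. A \<in> D} \<subseteq> C"
    by blast
qed

lemma closure_system_cs_join_pairs:
  assumes "D \<subseteq> Pow G"
  shows "closure_system G (cs_join G {{A, G} | A. A \<in> D})"
  using assms by (intro closure_system_cs_join) blast

theorem lemma2:
  fixes G :: "'g set" and M :: "'m set" and I :: "('g \<times> 'm) set"
    and R Rhat :: "'g set set"
  assumes "formal_context G M I"
    and "closure_system G R"
    and "R \<subseteq> Ext G M I"
    and "Rhat = cs_join G {{A, G} | A. A \<in> meet_irr G (Ext G M I) - meet_irr G R}"
  shows "closure_system G Rhat \<and> Rhat \<subseteq> Ext G M I \<and> cs_join G {R, Rhat} = Ext G M I
    \<and> (\<forall>S. closure_system G S \<and> S \<subseteq> Ext G M I \<and> cs_join G {R, S} = Ext G M I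
           \<longrightarrow> Rhat \<subseteq> S)"
proof -
  let ?E = "Ext G M I" and ?D = "meet_irr G (Ext G M I) - meet_irr G R"
  have "finite G"
    using assms(1) unfolding formal_context_def by blast
  have E: "closure_system G ?E" "?E \<subseteq> Pow G"
    using closure_system_Ext unfolding closure_system_def by blast+
  have "?D \<subseteq> ?E"
    using meet_irr_subset by blast
  have Rhat_cs: "closure_system G Rhat"
    unfolding assms(4) using \<open>?D \<subseteq> ?E\<close> E(2) by (intro closure_system_cs_join_pairs) (rule subset_trans)
  have Rhat_Ext: "Rhat \<subseteq> ?E"
    unfolding assms(4) using E(1) \<open>?D \<subseteq> ?E\<close> by (rule cs_join_pairs_least)
  have "?D \<subseteq> Rhat"
    unfolding assms(4) by (rule subset_cs_join_pairs)
  with meet_irr_subset[of G R] have "meet_irr G ?E \<subseteq> \<Union>{R, Rhat}"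
    by blast
  then have join: "cs_join G {R, Rhat} = ?E"
    by (rule cs_join_eq_if_meet_irr_subset[OF \<open>finite G\<close> E(1), rotated])
      (simp add: assms(3) Rhat_Ext)
  have least: "Rhat \<subseteq> S" if S: "closure_system G S" "S \<subseteq> ?E" "cs_join G {R, S} = ?E" for S
    unfolding assms(4)
    by (rule cs_join_pairs_least[OF S(1) meet_irr_diff_subset_if_cs_join_eq[OF E(1) assms(3) S(2,3)]])
  from Rhat_cs Rhat_Ext join least show ?thesis
    by blast
qed

end
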